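(* Let $E\in\mathbb{R}$ and $M>0$, and consider the time-independent Schrödinger equation $$\mathcal{H}\Phi=E\Phi,\qquad \mathcal{H}=\mathcal{V}(x,X)-\frac{1}{2M}\Delta_X,$$ for $\Phi:\mathbb{R}^{3n}\times\mathbb{R}^{3N}\to\mathbb{C}$. Suppose $\theta:\mathbb{R}^{3N}\to\mathbb{R}$ is a smooth solution of the Hamilton–Jacobi (eikonal) equation $$H_S(X,\nabla_X\theta(X))=0,\qquad H_S(X,P):=\tfrac12|P|^2+V_0(X)-E,\qquad V_0(X):=\frac{\langle\hat\psi(\cdot,X),\mathcal{V}(\cdot,X)\hat\psi(\cdot,X)\rangle}{\langle\hat\psi(\cdot,X),\hat\psi(\cdot,X)\rangle},$$ with primal variable $X$ and dual variable $P=\nabla_X\theta(X)$. Let $(X_t,P_t)$ solve the Hamiltonian system $\dot X_t=P_t$, $\dot P_t=-\nabla_XV_0(X_t)$ (so $P_t=\nabla_X\theta(X_t)$), let $G_t$ satisfy $\frac{d}{dt}\log G_t=\frac12\Delta_X\theta(X_t)$, and set $\hat G(X_t):=G_t$. Let $\hat\psi(\cdot,X_t)=\psi_t$, where $\psi_t$ satisfies the transport equation $$iM^{-1/2}\dot\psi_t=(\mathcal{V}-V_0)\psi_t-\frac{G_t}{2M}\Delta_X\Big(\frac{\psi_t}{G_t}\Big)$$ (here $\Delta_X(\psi_t/G_t)$ means $\Delta_X$ applied to $X\mapsto\hat\psi(\cdot,X)/\hat G(X)$ evaluated at $X_t$). Then $$\Phi(x,X_t)=\hat G^{-1}(X_t)\,\hat\psi(x,X_t)\,e^{iM^{1/2}\theta(X_t)}$$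 solves $\mathcal{H}\Phi=E\Phi$.
   Context: Here $x\in\mathbb{R}^{3n}$ are electron coordinates and $X=(X^1,\dots,X^N)\in\mathbb{R}^{3N}$ nuclei coordinates; all nuclei have the same mass $M$, and $\Delta_X=\sum_{k=1}^N\Delta_{X^k}$. The electron Hamiltonian $\mathcal{V}(\cdot,X)$ is, for each fixed $X$, a self-adjoint operator on functions of $x$ (acting as multiplication on functions depending only on $X$). The bracket $\langle\phi,\psi\rangle(X):=\int_{\mathbb{R}^{3n}}\phi(x,X)^*\psi(x,X)\,dx$. *)

theory Defs
  imports "HOL-Analysis.Analysis"
begin

definition pd :: "'a::real_normed_vector \<Rightarrow> ('a \<Rightarrow> 'b::real_normed_vector) \<Rightarrow> 'a \<Rightarrow> 'b" where
  "pd v f X = vector_derivative (\<lambda>t. f (X + t *\<^sub>R v)) (at 0)"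

primrec iter_pd :: "'a::real_normed_vector list \<Rightarrow> ('a \<Rightarrow> 'b::real_normed_vector) \<Rightarrow> 'a \<Rightarrow> 'b" where
  "iter_pd [] f = f"
| "iter_pd (b # bs) f = pd b (iter_pd bs f)"

definition smooth :: "('a::euclidean_space \<Rightarrow> 'b::real_normed_vector) \<Rightarrow> bool" where
  "smooth f \<longleftrightarrow> (\<forall>bs. set bs \<subseteq> Basis \<longrightarrow> (\<forall>X. iter_pd bs f differentiable (at X)))"

definition grad :: "('a::euclidean_space \<Rightarrow> real) \<Rightarrow> 'a \<Rightarrow> 'a" where
  "grad f X = (\<Sum>b\<in>Basis. pd b f X *\<^sub>R b)"

definition lap :: "('a::euclidean_space \<Rightarrow> 'b::real_normed_vector) \<Rightarrow> 'a \<Rightarrow> 'b" where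
  "lap f X = (\<Sum>b\<in>Basis. pd b (pd b f) X)"

definition br :: "('e::euclidean_space \<Rightarrow> complex) \<Rightarrow> ('e \<Rightarrow> complex) \<Rightarrow> complex" where
  "br \<phi> \<psi> = (\<integral>x. cnj (\<phi> x) * \<psi> x \<partial>lborel)"

definition V0 :: "('N \<Rightarrow> ('e::euclidean_space \<Rightarrow> complex) \<Rightarrow> ('e \<Rightarrow> complex))
                  \<Rightarrow> ('N \<Rightarrow> 'e \<Rightarrow> complex) \<Rightarrow> 'N \<Rightarrow> complex" where
  "V0 \<V> \<psi> X = br (\<psi> X) (\<V> X (\<psi> X)) / br (\<psi> X) (\<psi> X)"

definition HS :: "('N::euclidean_space \<Rightarrow> complex) \<Rightarrow> real \<Rightarrow> 'N \<Rightarrow> 'N \<Rightarrow> complex" where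
  "HS v0 E X P = complex_of_real ((norm P)\<^sup>2 / 2) + v0 X - complex_of_real E"

definition Ham :: "('N::euclidean_space \<Rightarrow> ('e \<Rightarrow> complex) \<Rightarrow> ('e \<Rightarrow> complex)) \<Rightarrow> real
                   \<Rightarrow> ('e \<Rightarrow> 'N \<Rightarrow> complex) \<Rightarrow> 'e \<Rightarrow> 'N \<Rightarrow> complex" where
  "Ham \<V> M \<Phi> x X = \<V> X (\<lambda>y. \<Phi> y X) x - complex_of_real (1 / (2 * M)) * lap (\<lambda>Z. \<Phi> x Z) X"

(* The electron Hamiltonian V(.,X): for each X a linear, symmetric operator defined on a
   linear domain D X of square-integrable functions of x (model of "self-adjoint"). *)
definition sym_op :: "(('e::euclidean_space \<Rightarrow> complex) set) \<Rightarrow> (('e \<Rightarrow> complex) \<Rightarrow> ('e \<Rightarrow> complex)) \<Rightarrow> bool" where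
  "sym_op D T \<longleftrightarrow>
     (\<forall>\<phi>\<in>D. \<phi> \<in> borel_measurable lborel \<and> integrable lborel (\<lambda>x. (norm (\<phi> x))\<^sup>2)) \<and>
     (\<forall>\<phi>\<in>D. \<forall>\<psi>\<in>D. \<forall>c. (\<lambda>x. c * \<phi> x + \<psi> x) \<in> D \<and>
                       T (\<lambda>x. c * \<phi> x + \<psi> x) = (\<lambda>x. c * T \<phi> x + T \<psi> x)) \<and>
     (\<forall>\<phi>\<in>D. \<forall>\<psi>\<in>D. br \<phi> (T \<psi>) = br (T \<phi>) \<psi>)"

end

theory Submission
  imports Defs
begin

text \<open>
  Write \<open>\<Phi> = u e\<^sup>i\<^sup>S\<^sup>\<theta>\<close> with \<open>u = \<psi>/Ghat\<close> and \<open>S = sqrt M\<close>. Expanding the Laplacian,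
  \<open>\<Delta>\<Phi> = (\<Delta>u + 2iS \<nabla>\<theta>\<cdot>\<nabla>u + iS \<Delta>\<theta> u - M |\<nabla>\<theta>|\<^sup>2 u) e\<^sup>i\<^sup>S\<^sup>\<theta>\<close>.
  The eikonal equation turns \<open>|\<nabla>\<theta>|\<^sup>2/2\<close> into \<open>E - V0\<close>. Along the characteristic
  \<open>X\<^sub>t\<close> we have \<open>dX\<^sub>t/dt = \<nabla>\<theta>(X\<^sub>t)\<close>, so \<open>\<nabla>\<theta>\<cdot>\<nabla>u = d/dt (\<psi>\<^sub>t/G\<^sub>t) = (d\<psi>\<^sub>t/dt - \<Delta>\<theta> \<psi>\<^sub>t/2)/G\<^sub>t\<close>
  by the equation for \<open>log G\<^sub>t\<close>; the two \<open>\<Delta>\<theta>\<close> terms cancel, and what is left of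
  \<open>(\<H> - E)\<Phi>\<close> is \<open>e\<^sup>i\<^sup>S\<^sup>\<theta>/G\<^sub>t\<close> times the transport equation.
\<close>

lemma pd_eq_derivative:
  assumes "(f has_derivative f') (at X)"
  shows "pd v f X = f' v"
proof -
  have "((\<lambda>t::real. X + t *\<^sub>R v) has_derivative (\<lambda>t. t *\<^sub>R v)) (at 0)"
    by (auto intro!: derivative_eq_intros)
  from diff_chain_at[OF this, of f f'] assms
  have "((\<lambda>t. f (X + t *\<^sub>R v)) has_vector_derivative f' v) (at 0)"
    using linear_scale[OF has_derivative_linear[OF assms]]
    by (simp add: has_vector_derivative_def o_def)
  then show ?thesis
    unfolding pd_def by (rule vector_derivative_at)
qed

lemma pd_eq_sum_Basis:
  fixes f :: "'a::euclidean_space \<Rightarrow> 'b::real_normed_vector"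
  assumes "f differentiable (at X)"
  shows "pd v f X = (\<Sum>b\<in>Basis. (v \<bullet> b) *\<^sub>R pd b f X)"
proof -
  obtain f' where f: "(f has_derivative f') (at X)"
    using assms unfolding differentiable_def by blast
  have lin: "linear f'"
    using has_derivative_linear[OF f] .
  have "f' v = f' (\<Sum>b\<in>Basis. (v \<bullet> b) *\<^sub>R b)"
    by (simp add: euclidean_representation)
  also have "\<dots> = (\<Sum>b\<in>Basis. (v \<bullet> b) *\<^sub>R f' b)"
    by (simp add: linear_sum[OF lin] linear_scale[OF lin])
  finally have "f' v = (\<Sum>b\<in>Basis. (v \<bullet> b) *\<^sub>R f' b)" .
  then show ?thesis
    by (simp add: pd_eq_derivative[OF f])
qed

lemma pd_add:
  assumes "f differentiable (at X)" "g differentiable (at X)"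
  shows "pd v (\<lambda>Z. f Z + g Z) X = pd v f X + pd v g X"
proof -
  obtain f' g' where f: "(f has_derivative f') (at X)" and g: "(g has_derivative g') (at X)"
    using assms unfolding differentiable_def by blast
  show ?thesis
    using pd_eq_derivative[OF has_derivative_add[OF f g]] pd_eq_derivative[OF f] pd_eq_derivative[OF g]
    by simp
qed

lemma pd_mult:
  fixes f g :: "'a::real_normed_vector \<Rightarrow> 'b::real_normed_algebra"
  assumes "f differentiable (at X)" "g differentiable (at X)"
  shows "pd v (\<lambda>Z. f Z * g Z) X = pd v f X * g X + f X * pd v g X"
proof -
  obtain f' g' where f: "(f has_derivative f') (at X)" and g: "(g has_derivative g') (at X)"
    using assms unfolding differentiable_def by blast
  show ?thesis
    using pd_eq_derivative[OF has_derivative_mult[OF f g]] pd_eq_derivative[OF f] pd_eq_derivative[OF g]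
    by simp
qed

lemma pd_divide:
  fixes f g :: "'a::real_normed_vector \<Rightarrow> 'b::real_normed_field"
  assumes "f differentiable (at X)" "g differentiable (at X)" "g X \<noteq> 0"
  shows "pd v (\<lambda>Z. f Z / g Z) X = (pd v f X * g X - f X * pd v g X) / (g X)\<^sup>2"
proof -
  obtain f' g' where f: "(f has_derivative f') (at X)" and g: "(g has_derivative g') (at X)"
    using assms unfolding differentiable_def by blast
  show ?thesis
    using pd_eq_derivative[OF has_derivative_divide'[OF f g assms(3)]]
      pd_eq_derivative[OF f] pd_eq_derivative[OF g]
    by (simp add: power2_eq_square)
qed

lemma pd_of_real:
  fixes g :: "'a::real_normed_vector \<Rightarrow> real"
  assumes "g differentiable (at X)"
  shows "pd v (\<lambda>Z. of_real (g Z) :: 'b::real_normed_algebra_1) X = of_real (pd v g X)"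
proof -
  obtain g' where g: "(g has_derivative g') (at X)"
    using assms unfolding differentiable_def by blast
  show ?thesis
    using pd_eq_derivative[OF has_derivative_of_real[OF g]] pd_eq_derivative[OF g] by simp
qed

lemma differentiable_of_real [derivative_intros]:
  fixes g :: "'a::real_normed_vector \<Rightarrow> real"
  shows "g differentiable (at X) \<Longrightarrow>
    (\<lambda>Z. of_real (g Z) :: 'b::real_normed_algebra_1) differentiable (at X)"
  unfolding differentiable_def by (blast intro: has_derivative_of_real)

lemma has_derivative_exp_compose:
  fixes f :: "'a::real_normed_vector \<Rightarrow> 'b::{real_normed_field,banach}"
  assumes "(f has_derivative f') (at X)"
  shows "((\<lambda>Z. exp (f Z)) has_derivative (\<lambda>h. f' h * exp (f X))) (at X)"
  using diff_chain_at[OF assms DERIV_exp[unfolded has_field_derivative_def]]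
  by (simp add: o_def mult.commute)

lemma differentiable_exp_compose [derivative_intros]:
  fixes f :: "'a::real_normed_vector \<Rightarrow> 'b::{real_normed_field,banach}"
  shows "f differentiable (at X) \<Longrightarrow> (\<lambda>Z. exp (f Z)) differentiable (at X)"
  unfolding differentiable_def by (blast intro: has_derivative_exp_compose)

lemma pd_exp:
  fixes f :: "'a::real_normed_vector \<Rightarrow> 'b::{real_normed_field,banach}"
  assumes "f differentiable (at X)"
  shows "pd v (\<lambda>Z. exp (f Z)) X = pd v f X * exp (f X)"
proof -
  obtain f' where f: "(f has_derivative f') (at X)"
    using assms unfolding differentiable_def by blast
  show ?thesis
    using pd_eq_derivative[OF has_derivative_exp_compose[OF f]] pd_eq_derivative[OF f] by simp
qed

definition twice_differentiable :: "('a::euclidean_space \<Rightarrow> 'b::real_normed_vector) \<Rightarrow> bool" where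
  "twice_differentiable f \<longleftrightarrow>
     (\<forall>Z. f differentiable (at Z)) \<and> (\<forall>b\<in>Basis. \<forall>Z. pd b f differentiable (at Z))"

lemma smooth_imp_twice_differentiable:
  assumes "smooth f"
  shows "twice_differentiable f"
proof -
  have "\<forall>X. iter_pd bs f differentiable (at X)" if "set bs \<subseteq> Basis" for bs
    using assms that unfolding smooth_def by blast
  from this[of "[]"] this[of "[b]" for b] show ?thesis
    unfolding twice_differentiable_def by simp
qed

lemma twice_differentiable_divide:
  fixes f g :: "'a::euclidean_space \<Rightarrow> 'b::real_normed_field"
  assumes "twice_differentiable f" "twice_differentiable g" "\<And>Z. g Z \<noteq> 0"
  shows "twice_differentiable (\<lambda>Z. f Z / g Z)"
proof -
  have "pd b (\<lambda>Z. f Z / g Z) = (\<lambda>Z. (pd b f Z * g Z - f Z * pd b g Z) / (g Z)\<^sup>2)" for b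
    using assms by (auto simp: twice_differentiable_def pd_divide)
  then show ?thesis
    using assms unfolding twice_differentiable_def by (auto intro!: derivative_intros)
qed

lemma twice_differentiable_of_real:
  fixes g :: "'a::euclidean_space \<Rightarrow> real"
  assumes "twice_differentiable g"
  shows "twice_differentiable (\<lambda>Z. of_real (g Z) :: 'b::real_normed_algebra_1)"
proof -
  have "pd b (\<lambda>Z. of_real (g Z) :: 'b) = (\<lambda>Z. of_real (pd b g Z))" for b
    using assms by (auto simp: twice_differentiable_def pd_of_real)
  then show ?thesis
    using assms unfolding twice_differentiable_def by (auto intro!: derivative_intros)
qed

lemma pd_const_mult_of_real:
  fixes g :: "'a::real_normed_vector \<Rightarrow> real" and a :: "'b::real_normed_algebra_1"
  assumes "g differentiable (at X)"
  shows "pd v (\<lambda>Z. a * of_real (c * g Z)) X = a * of_real (c * pd v g X)"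
proof -
  obtain g' where g: "(g has_derivative g') (at X)"
    using assms unfolding differentiable_def by blast
  have "((\<lambda>Z. a * of_real (c * g Z)) has_derivative (\<lambda>h. a * of_real (c * g' h))) (at X)"
    by (auto intro!: derivative_eq_intros g)
  then show ?thesis
    by (simp add: pd_eq_derivative[OF g] pd_eq_derivative)
qed

lemma pd_phase:
  fixes \<theta> :: "'a::real_normed_vector \<Rightarrow> real"
  assumes "\<theta> differentiable (at X)"
  shows "pd v (\<lambda>Z. exp (\<i> * of_real (c * \<theta> Z))) X
       = \<i> * of_real (c * pd v \<theta> X) * exp (\<i> * of_real (c * \<theta> X))"
proof -
  have "(\<lambda>Z. \<i> * of_real (c * \<theta> Z)) differentiable (at X)"
    using assms by (auto intro!: derivative_intros)
  then show ?thesis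
    using assms by (simp add: pd_exp pd_const_mult_of_real del: of_real_mult)
qed

lemma twice_differentiable_phase:
  fixes \<theta> :: "'a::euclidean_space \<Rightarrow> real"
  assumes "twice_differentiable \<theta>"
  shows "twice_differentiable (\<lambda>Z. exp (\<i> * of_real (c * \<theta> Z)))"
proof -
  have "pd b (\<lambda>Z. exp (\<i> * of_real (c * \<theta> Z)))
      = (\<lambda>Z. \<i> * of_real (c * pd b \<theta> Z) * exp (\<i> * of_real (c * \<theta> Z)))" for b
    using assms unfolding twice_differentiable_def by (intro ext pd_phase) blast
  then show ?thesis
    using assms unfolding twice_differentiable_def by (auto intro!: derivative_intros)
qed

lemma inner_grad_Basis: "b \<in> Basis \<Longrightarrow> grad f X \<bullet> b = pd b f X"
  unfolding grad_def by (simp add: inner_sum_left inner_Basis if_distrib sum.delta cong: if_cong)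

lemma norm_grad_squared: "(norm (grad f X))\<^sup>2 = (\<Sum>b\<in>Basis. (pd b f X)\<^sup>2)"
proof -
  have "(norm (grad f X))\<^sup>2 = (\<Sum>b\<in>Basis. (grad f X \<bullet> b) * (grad f X \<bullet> b))"
    by (metis power2_norm_eq_inner euclidean_inner)
  then show ?thesis
    by (simp add: inner_grad_Basis power2_eq_square)
qed

lemma pd_along_grad:
  fixes u :: "'a::euclidean_space \<Rightarrow> 'b::real_normed_algebra_1"
  assumes "u differentiable (at X)"
  shows "pd (grad f X) u X = (\<Sum>b\<in>Basis. of_real (pd b f X) * pd b u X)"
  using assms by (simp add: pd_eq_sum_Basis inner_grad_Basis scaleR_conv_of_real cong: sum.cong)

lemma lap_mult:
  fixes f g :: "'a::euclidean_space \<Rightarrow> 'b::real_normed_algebra_1"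
  assumes "twice_differentiable f" "twice_differentiable g"
  shows "lap (\<lambda>Z. f Z * g Z) X
       = lap f X * g X + 2 * (\<Sum>b\<in>Basis. pd b f X * pd b g X) + f X * lap g X"
proof -
  have "pd b (pd b (\<lambda>Z. f Z * g Z)) X
      = pd b (pd b f) X * g X + 2 * (pd b f X * pd b g X) + f X * pd b (pd b g) X"
    if b: "b \<in> Basis" for b
  proof -
    have "pd b (\<lambda>Z. f Z * g Z) = (\<lambda>Z. pd b f Z * g Z + f Z * pd b g Z)"
      using assms by (auto simp: twice_differentiable_def pd_mult)
    moreover have "\<forall>Z. f differentiable (at Z)" "\<forall>Z. g differentiable (at Z)"
      "pd b f differentiable (at X)" "pd b g differentiable (at X)"
      using assms b by (auto simp: twice_differentiable_def)
    ultimately show ?thesis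
      by (simp add: pd_add pd_mult derivative_intros algebra_simps mult_2)
  qed
  then show ?thesis
    unfolding lap_def by (simp add: sum.distrib sum_distrib_left sum_distrib_right)
qed

lemma lap_phase:
  fixes \<theta> :: "'a::euclidean_space \<Rightarrow> real"
  assumes "twice_differentiable \<theta>"
  shows "lap (\<lambda>Z. exp (\<i> * of_real (c * \<theta> Z))) X
       = (\<i> * of_real (c * lap \<theta> X) - of_real (c\<^sup>2 * (norm (grad \<theta> X))\<^sup>2))
         * exp (\<i> * of_real (c * \<theta> X))"
proof -
  define e where "e = (\<lambda>Z. exp (\<i> * of_real (c * \<theta> Z)))"
  have "pd b (pd b e) X
      = (\<i> * of_real (c * pd b (pd b \<theta>) X) - of_real (c\<^sup>2 * (pd b \<theta> X)\<^sup>2)) * e X"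
    if b: "b \<in> Basis" for b
  proof -
    have "pd b e = (\<lambda>Z. \<i> * of_real (c * pd b \<theta> Z) * e Z)"
      using assms unfolding e_def twice_differentiable_def by (intro ext pd_phase) blast
    moreover have "e differentiable (at X)"
      using assms unfolding e_def twice_differentiable_def by (auto intro!: derivative_intros)
    moreover have "pd b \<theta> differentiable (at X)"
      using assms b unfolding twice_differentiable_def by blast
    moreover have "(\<lambda>Z. \<i> * of_real (c * pd b \<theta> Z)) differentiable (at X)"
      using \<open>pd b \<theta> differentiable (at X)\<close> by (auto intro!: derivative_intros)
    ultimately show ?thesis
      using pd_mult[of "\<lambda>Z. \<i> * of_real (c * pd b \<theta> Z)" X e b]
      by (simp add: pd_const_mult_of_real del: of_real_mult)
        (simp add: algebra_simps power2_eq_square)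
  qed
  then have "lap e X
      = (\<i> * of_real (c * lap \<theta> X) - of_real (c\<^sup>2 * (norm (grad \<theta> X))\<^sup>2)) * e X"
    unfolding lap_def norm_grad_squared
    by (simp add: sum_distrib_right sum_subtractf sum_distrib_left left_diff_distrib)
  then show ?thesis
    unfolding e_def .
qed

lemma lap_mult_phase:
  fixes u :: "'a::euclidean_space \<Rightarrow> complex" and \<theta> :: "'a \<Rightarrow> real"
  assumes u: "twice_differentiable u" and \<theta>: "twice_differentiable \<theta>"
  shows "lap (\<lambda>Z. u Z * exp (\<i> * of_real (c * \<theta> Z))) X
       = (lap u X + 2 * \<i> * of_real c * pd (grad \<theta> X) u X
          + (\<i> * of_real (c * lap \<theta> X) - of_real (c\<^sup>2 * (norm (grad \<theta> X))\<^sup>2)) * u X)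
         * exp (\<i> * of_real (c * \<theta> X))"
proof -
  define e where "e = (\<lambda>Z. exp (\<i> * of_real (c * \<theta> Z)))"
  have cross: "(\<Sum>b\<in>Basis. pd b u X * pd b e X) = \<i> * of_real c * pd (grad \<theta> X) u X * e X"
  proof -
    have "(\<Sum>b\<in>Basis. pd b u X * pd b e X)
        = (\<Sum>b\<in>Basis. \<i> * of_real c * (of_real (pd b \<theta> X) * pd b u X) * e X)"
      using \<theta> unfolding e_def twice_differentiable_def
      by (intro sum.cong) (simp_all add: pd_phase del: of_real_mult, simp add: algebra_simps)
    also have "\<dots> = \<i> * of_real c * pd (grad \<theta> X) u X * e X"
      using u unfolding twice_differentiable_def
      by (simp add: pd_along_grad sum_distrib_left sum_distrib_right)
    finally show ?thesis .
  qed
  have lap_e: "lap e X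
      = (\<i> * of_real (c * lap \<theta> X) - of_real (c\<^sup>2 * (norm (grad \<theta> X))\<^sup>2)) * e X"
    unfolding e_def by (rule lap_phase[OF \<theta>])
  have "lap (\<lambda>Z. u Z * e Z) X
      = lap u X * e X + 2 * (\<Sum>b\<in>Basis. pd b u X * pd b e X) + u X * lap e X"
    unfolding e_def by (rule lap_mult[OF u twice_differentiable_phase[OF \<theta>]])
  also have "\<dots> = (lap u X + 2 * \<i> * of_real c * pd (grad \<theta> X) u X
         + (\<i> * of_real (c * lap \<theta> X) - of_real (c\<^sup>2 * (norm (grad \<theta> X))\<^sup>2)) * u X) * e X"
    unfolding cross lap_e by (simp add: algebra_simps)
  finally show ?thesis
    unfolding e_def .
qed

lemma has_vector_derivative_pd_compose:
  assumes "f differentiable (at (X t))" "(X has_vector_derivative v) (at t)"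
  shows "((\<lambda>s. f (X s)) has_vector_derivative pd v f (X t)) (at t)"
proof -
  obtain f' where f: "(f has_derivative f') (at (X t))"
    using assms(1) unfolding differentiable_def by blast
  show ?thesis
    using vector_derivative_diff_chain_within[OF assms(2) has_derivative_at_withinI[OF f]]
    by (simp add: o_def pd_eq_derivative[OF f])
qed

lemma pd_eq_of_log_derivative:
  fixes Ghat :: "'a::real_normed_vector \<Rightarrow> real"
  assumes "open T" "t \<in> T"
    and G_pos: "\<And>s. s \<in> T \<Longrightarrow> G s > 0"
    and Ghat_G: "\<And>s. s \<in> T \<Longrightarrow> Ghat (X s) = G s"
    and log_G: "((\<lambda>s. ln (G s)) has_real_derivative L) (at t)"
    and X: "(X has_vector_derivative v) (at t)"
    and "Ghat differentiable (at (X t))"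
  shows "pd v Ghat (X t) = G t * L"
proof (rule DERIV_unique)
  have "((\<lambda>s. Ghat (X s)) has_real_derivative pd v Ghat (X t)) (at t)"
    using has_vector_derivative_pd_compose[OF assms(7) X]
    by (simp add: has_real_derivative_iff_has_vector_derivative)
  then show "(G has_real_derivative pd v Ghat (X t)) (at t)"
    by (rule has_field_derivative_transform_within_open[OF _ assms(1,2)]) (simp add: Ghat_G)
  have "((\<lambda>s. exp (ln (G s))) has_real_derivative exp (ln (G t)) * L) (at t)"
    by (rule DERIV_chain2[OF DERIV_exp log_G])
  then have "(G has_real_derivative exp (ln (G t)) * L) (at t)"
    by (rule has_field_derivative_transform_within_open[OF _ assms(1,2)]) (simp add: G_pos)
  then show "(G has_real_derivative G t * L) (at t)"
    using G_pos[OF assms(2)] by simp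
qed

lemma sym_op_scale:
  assumes "sym_op D T" "\<phi> \<in> D"
  shows "T (\<lambda>y. c * \<phi> y) = (\<lambda>y. c * T \<phi> y)"
proof -
  have lin: "\<And>\<phi> \<psi> c. \<phi> \<in> D \<Longrightarrow> \<psi> \<in> D \<Longrightarrow> (\<lambda>x. c * \<phi> x + \<psi> x) \<in> D \<and>
                       T (\<lambda>x. c * \<phi> x + \<psi> x) = (\<lambda>x. c * T \<phi> x + T \<psi> x)"
    using assms(1) unfolding sym_op_def by blast
  have zero: "(\<lambda>x. 0) \<in> D"
    using lin[OF assms(2) assms(2), of "-1"] by simp
  have "T (\<lambda>x. 0) = (\<lambda>x. T (\<lambda>x. 0) x + T (\<lambda>x. 0) x)"
    using lin[OF zero zero, of 1] by simp
  then have "T (\<lambda>x. 0) = (\<lambda>x. 0)"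
    by (metis add_cancel_left_left)
  then show ?thesis
    using lin[OF assms(2) zero, of c] by simp
qed

lemma pd_quotient_along_trajectory:
  fixes Ghat :: "'a::real_normed_vector \<Rightarrow> real" and f :: "'a \<Rightarrow> complex"
  assumes "open T" "t \<in> T"
    and G_pos: "\<And>s. s \<in> T \<Longrightarrow> G s > 0"
    and Ghat_G: "\<And>s. s \<in> T \<Longrightarrow> Ghat (X s) = G s"
    and log_G: "((\<lambda>s. ln (G s)) has_real_derivative L) (at t)"
    and X: "(X has_vector_derivative v) (at t)"
    and f: "f differentiable (at (X t))" and Ghat: "Ghat differentiable (at (X t))"
  shows "pd v (\<lambda>Y. f Y / of_real (Ghat Y)) (X t)
       = (vector_derivative (\<lambda>s. f (X s)) (at t) - of_real L * f (X t)) / of_real (Ghat (X t))"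
proof -
  have Ghat_pos: "Ghat (X t) > 0"
    using G_pos[OF assms(2)] Ghat_G[OF assms(2)] by simp
  have "vector_derivative (\<lambda>s. f (X s)) (at t) = pd v f (X t)"
    by (rule vector_derivative_at[OF has_vector_derivative_pd_compose[OF f X]])
  moreover have "pd v Ghat (X t) = Ghat (X t) * L"
    using pd_eq_of_log_derivative[OF assms(1-5) X Ghat] Ghat_G[OF assms(2)] by simp
  ultimately show ?thesis
    using f Ghat Ghat_pos
    by (simp add: pd_divide pd_of_real differentiable_of_real field_simps power2_eq_square)
qed

lemma Ham_wkb_ansatz:
  fixes \<theta> Ghat :: "'N::euclidean_space \<Rightarrow> real" and \<psi> :: "'N \<Rightarrow> 'e::euclidean_space \<Rightarrow> complex"
    and M :: real and X :: 'N and x :: 'e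
  assumes "M > 0" "sym_op (D X) (\<V> X)" "\<psi> X \<in> D X"
    and \<theta>: "twice_differentiable \<theta>"
    and u: "twice_differentiable (\<lambda>Y. \<psi> Y x / of_real (Ghat Y))"
  defines "u \<equiv> \<lambda>Y. \<psi> Y x / of_real (Ghat Y)"
    and "e \<equiv> exp (\<i> * of_real (sqrt M * \<theta> X))"
  shows "Ham \<V> M (\<lambda>y Y. of_real (1 / Ghat Y) * \<psi> Y y * exp (\<i> * of_real (sqrt M * \<theta> Y))) x X
       = of_real (1 / Ghat X) * e * \<V> X (\<psi> X) x
         - 1 / (2 * (of_real (sqrt M))\<^sup>2)
           * ((lap u X + 2 * \<i> * of_real (sqrt M) * pd (grad \<theta> X) u X
               + (\<i> * of_real (sqrt M * lap \<theta> X) - of_real ((sqrt M)\<^sup>2 * (norm (grad \<theta> X))\<^sup>2))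
                 * u X) * e)"
proof -
  have V: "\<V> X (\<lambda>y. of_real (1 / Ghat X) * \<psi> X y * e) x
      = of_real (1 / Ghat X) * e * \<V> X (\<psi> X) x"
    using sym_op_scale[OF assms(2,3), of "of_real (1 / Ghat X) * e"] by (simp add: ac_simps)
  have \<Phi>: "(\<lambda>Z. of_real (1 / Ghat Z) * \<psi> Z x * exp (\<i> * of_real (sqrt M * \<theta> Z)))
      = (\<lambda>Z. u Z * exp (\<i> * of_real (sqrt M * \<theta> Z)))"
    by (simp add: u_def divide_inverse ac_simps)
  have M: "of_real (1 / (2 * M)) = 1 / (2 * (of_real (sqrt M) :: complex)\<^sup>2)"
    using assms(1) by (simp flip: of_real_power)
  show ?thesis
    unfolding Ham_def \<Phi> e_def[symmetric] V M
    unfolding e_def u_def lap_mult_phase[OF u \<theta>] ..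
qed

lemma wkb_cancellation:
  fixes s g l q E :: real and \<psi> d\<psi> V\<psi> v Lu e :: complex
  assumes "s \<noteq> 0" "g \<noteq> 0"
    and transport: "\<i> * (1 / of_real s) * d\<psi> = V\<psi> - v * \<psi> - of_real g / (2 * (of_real s)\<^sup>2) * Lu"
    and eikonal: "of_real q / 2 + v - of_real E = 0"
  shows "of_real (1 / g) * e * V\<psi>
       - 1 / (2 * (of_real s)\<^sup>2)
         * ((Lu + 2 * \<i> * of_real s * ((d\<psi> - of_real (l / 2) * \<psi>) / of_real g)
             + (\<i> * of_real (s * l) - of_real (s\<^sup>2 * q)) * (\<psi> / of_real g)) * e)
       = of_real E * (of_real (1 / g) * \<psi> * e)"
proof -
  have v: "v = of_real E - of_real q / 2"
    using eikonal by (simp add: algebra_simps)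
  have V\<psi>: "V\<psi> = \<i> * d\<psi> / of_real s + v * \<psi> + of_real g / (2 * (of_real s)\<^sup>2) * Lu"
    using transport by (simp add: algebra_simps)
  show ?thesis
    unfolding V\<psi> v using assms(1,2) by (simp add: field_simps power2_eq_square)
qed

theorem theorem3p1:
  fixes E M :: real
    and \<V> :: "real^3^'N \<Rightarrow> (real^3^'n \<Rightarrow> complex) \<Rightarrow> (real^3^'n \<Rightarrow> complex)"
    and D :: "real^3^'N \<Rightarrow> (real^3^'n \<Rightarrow> complex) set"
    and \<theta> :: "real^3^'N \<Rightarrow> real"
    and \<psi> :: "real^3^'N \<Rightarrow> real^3^'n \<Rightarrow> complex"
    and Ghat :: "real^3^'N \<Rightarrow> real"
    and T :: "real set"
    and X P :: "real \<Rightarrow> real^3^'N"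
    and G :: "real \<Rightarrow> real"
  assumes M_pos: "M > 0"
    and op: "\<And>Y. sym_op (D Y) (\<V> Y)"
    and psi_dom: "\<And>Y. \<psi> Y \<in> D Y"
    and theta_smooth: "smooth \<theta>"
    and psi_smooth: "\<And>x. smooth (\<lambda>Y. \<psi> Y x)"
    and Ghat_smooth: "smooth Ghat"
    and Ghat_pos: "\<And>Y. Ghat Y > 0"
    and eikonal: "\<And>Y. HS (V0 \<V> \<psi>) E Y (grad \<theta> Y) = 0"
    and T_open: "open T"
    and X_dot: "\<And>t. t \<in> T \<Longrightarrow> (X has_vector_derivative P t) (at t)"
    and P_dot: "\<And>t. t \<in> T \<Longrightarrow> (P has_vector_derivative - grad (\<lambda>Y. Re (V0 \<V> \<psi> Y)) (X t)) (at t)"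
    and P_grad: "\<And>t. t \<in> T \<Longrightarrow> P t = grad \<theta> (X t)"
    and G_pos: "\<And>t. t \<in> T \<Longrightarrow> G t > 0"
    and G_log: "\<And>t. t \<in> T \<Longrightarrow> ((\<lambda>s. ln (G s)) has_real_derivative (lap \<theta> (X t) / 2)) (at t)"
    and Ghat_G: "\<And>t. t \<in> T \<Longrightarrow> Ghat (X t) = G t"
    and transport: "\<And>t x. t \<in> T \<Longrightarrow>
        \<i> * complex_of_real (1 / sqrt M) * vector_derivative (\<lambda>s. \<psi> (X s) x) (at t)
        = \<V> (X t) (\<psi> (X t)) x - V0 \<V> \<psi> (X t) * \<psi> (X t) x
          - complex_of_real (G t / (2 * M)) * lap (\<lambda>Y. \<psi> Y x / complex_of_real (Ghat Y)) (X t)"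
  shows "\<forall>t\<in>T. \<forall>x.
           Ham \<V> M (\<lambda>y Y. complex_of_real (1 / Ghat Y) * \<psi> Y y * exp (\<i> * complex_of_real (sqrt M * \<theta> Y))) x (X t)
         = complex_of_real E * (complex_of_real (1 / Ghat (X t)) * \<psi> (X t) x * exp (\<i> * complex_of_real (sqrt M * \<theta> (X t))))"
proof (intro ballI allI)
  fix t x
  assume t: "t \<in> T"
  have \<theta>: "twice_differentiable \<theta>" and \<psi>: "twice_differentiable (\<lambda>Y. \<psi> Y x)"
    and Ghat: "twice_differentiable Ghat"
    using theta_smooth psi_smooth Ghat_smooth by (simp_all add: smooth_imp_twice_differentiable)
  have Ghat_nz: "Ghat Y \<noteq> 0" for Y
    using Ghat_pos[of Y] by simp
  have u: "twice_differentiable (\<lambda>Y. \<psi> Y x / of_real (Ghat Y))"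
    using Ghat_nz by (intro twice_differentiable_divide \<psi> twice_differentiable_of_real Ghat) simp
  have "(X has_vector_derivative grad \<theta> (X t)) (at t)"
    using X_dot[OF t] P_grad[OF t] by simp
  then have amplitude_derivative: "pd (grad \<theta> (X t)) (\<lambda>Y. \<psi> Y x / of_real (Ghat Y)) (X t)
      = (vector_derivative (\<lambda>s. \<psi> (X s) x) (at t) - of_real (lap \<theta> (X t) / 2) * \<psi> (X t) x)
        / of_real (Ghat (X t))"
    using \<psi> Ghat unfolding twice_differentiable_def
    by (intro pd_quotient_along_trajectory[where X = X and Ghat = Ghat,
          OF T_open t G_pos Ghat_G G_log[OF t]]) simp_all
  have "\<i> * (1 / of_real (sqrt M)) * vector_derivative (\<lambda>s. \<psi> (X s) x) (at t)
      = \<V> (X t) (\<psi> (X t)) x - V0 \<V> \<psi> (X t) * \<psi> (X t) x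
        - of_real (Ghat (X t)) / (2 * (of_real (sqrt M))\<^sup>2)
          * lap (\<lambda>Y. \<psi> Y x / of_real (Ghat Y)) (X t)"
    using transport[OF t, of x] M_pos by (simp add: Ghat_G[OF t] flip: of_real_power)
  moreover have "of_real ((norm (grad \<theta> (X t)))\<^sup>2) / 2 + V0 \<V> \<psi> (X t) - of_real E = 0"
    using eikonal[of "X t"] by (simp add: HS_def)
  ultimately show "Ham \<V> M (\<lambda>y Y. of_real (1 / Ghat Y) * \<psi> Y y * exp (\<i> * of_real (sqrt M * \<theta> Y)))
      x (X t) = of_real E * (of_real (1 / Ghat (X t)) * \<psi> (X t) x * exp (\<i> * of_real (sqrt M * \<theta> (X t))))"
    unfolding Ham_wkb_ansatz[OF M_pos op psi_dom \<theta> u] amplitude_derivative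
    using M_pos Ghat_nz by (intro wkb_cancellation) simp_all
qed

end
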